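(* Let $X$ be a compact metric space, $f\colon X\to X$ a chain transitive continuous map and $D\in\mathcal{D}(f)$. Suppose that for any $\epsilon>0$ there is $\delta>0$ such that every $\delta$-pseudo orbit $(x_i)_{i\ge0}$ of $f$ with $x_0\in D$ is $\epsilon$-shadowed by some $x\in D$. Then for any $y,z\in D$ and $\epsilon>0$ there is $w\in D$ such that $d(z,w)\le\epsilon$ and $\limsup_{k\to\infty}d(f^k(y),f^k(w))\le\epsilon$.
   Context: A $\delta$-chain of $f$ is a finite sequence $(x_i)_{i=0}^k$, $k>0$, with $d(f(x_i),x_{i+1})\le\delta$ for all $i<k$; it is a $\delta$-cycle of length $k$ if $x_0=x_k$. $f$ is chain transitive if for all $x,y\in X$ and $\delta>0$ there is a $\delta$-chain from $x$ to $y$. For $\delta>0$, $m(f,\delta)$ is the gcd of the lengths of $\delta$-cycles; $x\sim_{f,\delta}y$ iff there is a $\delta$-chain from $x$ to $y$ whose length is divisible by $m(f,\delta)$; $x\sim_f y$ iff $x\sim_{f,\delta}y$ for all $\delta>0$; $\mathcal{D}(f)$ is the set of equivalence classes of $\sim_f$. A $\delta$-pseudo orbit is a sequence $(x_i)_{i\ge0}$ with $d(f(x_i),x_{i+1})\le\delta$ for all $i\ge0$; it is $\epsilon$-shadowed by $x$ if $d(f^i(x),x_i)\le\epsilon$ for all $i\ge0$. *)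

theory Defs
  imports "HOL-Analysis.Analysis"
begin

text \<open>The compact metric space X is a compact subset of a metric space type;
  all chains and pseudo orbits are required to lie in X.\<close>

definition is_delta_chain :: "'a::metric_space set \<Rightarrow> ('a \<Rightarrow> 'a) \<Rightarrow> real \<Rightarrow> nat \<Rightarrow> (nat \<Rightarrow> 'a) \<Rightarrow> bool" where
  "is_delta_chain X f \<delta> k xs \<longleftrightarrow> k > 0 \<and> (\<forall>i\<le>k. xs i \<in> X) \<and>
     (\<forall>i<k. dist (f (xs i)) (xs (Suc i)) \<le> \<delta>)"

definition chain_from_to :: "'a::metric_space set \<Rightarrow> ('a \<Rightarrow> 'a) \<Rightarrow> real \<Rightarrow> nat \<Rightarrow> 'a \<Rightarrow> 'a \<Rightarrow> bool" where
  "chain_from_to X f \<delta> k x y \<longleftrightarrow> (\<exists>xs. is_delta_chain X f \<delta> k xs \<and> xs 0 = x \<and> xs k = y)"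

definition chain_transitive :: "'a::metric_space set \<Rightarrow> ('a \<Rightarrow> 'a) \<Rightarrow> bool" where
  "chain_transitive X f \<longleftrightarrow> (\<forall>x\<in>X. \<forall>y\<in>X. \<forall>\<delta>>0. \<exists>k. chain_from_to X f \<delta> k x y)"

definition is_delta_cycle :: "'a::metric_space set \<Rightarrow> ('a \<Rightarrow> 'a) \<Rightarrow> real \<Rightarrow> nat \<Rightarrow> (nat \<Rightarrow> 'a) \<Rightarrow> bool" where
  "is_delta_cycle X f \<delta> k xs \<longleftrightarrow> is_delta_chain X f \<delta> k xs \<and> xs 0 = xs k"

definition cycle_gcd :: "'a::metric_space set \<Rightarrow> ('a \<Rightarrow> 'a) \<Rightarrow> real \<Rightarrow> nat" where
  "cycle_gcd X f \<delta> = Gcd {k. \<exists>xs. is_delta_cycle X f \<delta> k xs}"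

definition rel_delta :: "'a::metric_space set \<Rightarrow> ('a \<Rightarrow> 'a) \<Rightarrow> real \<Rightarrow> 'a \<Rightarrow> 'a \<Rightarrow> bool" where
  "rel_delta X f \<delta> x y \<longleftrightarrow> (\<exists>k. cycle_gcd X f \<delta> dvd k \<and> chain_from_to X f \<delta> k x y)"

definition rel_f :: "'a::metric_space set \<Rightarrow> ('a \<Rightarrow> 'a) \<Rightarrow> 'a \<Rightarrow> 'a \<Rightarrow> bool" where
  "rel_f X f x y \<longleftrightarrow> (\<forall>\<delta>>0. rel_delta X f \<delta> x y)"

definition classes_D :: "'a::metric_space set \<Rightarrow> ('a \<Rightarrow> 'a) \<Rightarrow> 'a set set" where
  "classes_D X f = X // {(x, y). x \<in> X \<and> y \<in> X \<and> rel_f X f x y}"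

definition pseudo_orbit :: "'a::metric_space set \<Rightarrow> ('a \<Rightarrow> 'a) \<Rightarrow> real \<Rightarrow> (nat \<Rightarrow> 'a) \<Rightarrow> bool" where
  "pseudo_orbit X f \<delta> xs \<longleftrightarrow> (\<forall>i. xs i \<in> X) \<and> (\<forall>i. dist (f (xs i)) (xs (Suc i)) \<le> \<delta>)"

definition shadowed_by :: "('a::metric_space \<Rightarrow> 'a) \<Rightarrow> real \<Rightarrow> (nat \<Rightarrow> 'a) \<Rightarrow> 'a \<Rightarrow> bool" where
  "shadowed_by f \<epsilon> xs x \<longleftrightarrow> (\<forall>i. dist ((f ^^ i) x) (xs i) \<le> \<epsilon>)"

end

theory Submission
  imports Defs
begin

text \<open>Fix \<open>\<delta> > 0\<close> and let \<open>m\<close> be the gcd of the lengths of \<open>\<delta>\<close>-cycles.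
  As \<open>y\<close> and \<open>z\<close> lie in the same class, some \<open>\<delta>\<close>-chain from \<open>z\<close> to \<open>y\<close>
  has length divisible by \<open>m\<close>. The lengths of \<open>\<delta>\<close>-cycles through \<open>y\<close> form an
  additively closed set of naturals whose gcd divides \<open>m\<close>, so every large multiple
  of \<open>m\<close> is such a length. By compactness there are \<open>s < t\<close>, with \<open>t - s\<close> as
  large as we like, such that \<open>f\<^sup>s(y)\<close> is \<open>\<delta>\<close>-close to \<open>f\<^sup>t(y)\<close>; this return
  is a \<open>\<delta>\<close>-cycle, so \<open>m\<close> divides \<open>t - s\<close>. Going from \<open>z\<close> to \<open>y\<close>, looping at
  \<open>y\<close>, and following the orbit of \<open>y\<close> for \<open>s\<close> steps with a final jump to
  \<open>f\<^sup>t(y)\<close> thus gives a \<open>\<delta>\<close>-chain from \<open>z\<close> to \<open>f\<^sup>t(y)\<close> of length exactly \<open>t\<close>.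
  Continued by the orbit of \<open>y\<close>, it is a \<open>\<delta>\<close>-pseudo orbit starting in \<open>D\<close> that
  eventually coincides with the orbit of \<open>y\<close>; a point of \<open>D\<close> shadowing it is the
  required \<open>w\<close>.\<close>

lemma add_closed_mult_mem:
  fixes C :: "nat set"
  assumes closed: "\<forall>a\<in>C. \<forall>b\<in>C. a + b \<in> C"
    and "c \<in> C" "0 < n"
  shows "n * c \<in> C"
  using \<open>0 < n\<close>
proof (induction n)
  case (Suc n)
  then show ?case
    using closed \<open>c \<in> C\<close> by (cases "n = 0") auto
qed simp

lemma add_closed_lincomb_mem:
  fixes C :: "nat set"
  assumes closed: "\<forall>a\<in>C. \<forall>b\<in>C. a + b \<in> C"
    and "a \<in> C" "b \<in> C" "0 < i + j"
  shows "i * a + j * b \<in> C"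
  using add_closed_mult_mem[OF closed \<open>a \<in> C\<close>, of i] add_closed_mult_mem[OF closed \<open>b \<in> C\<close>, of j]
    closed \<open>0 < i + j\<close>
  by (cases "i = 0"; cases "j = 0") auto

lemma add_closed_least_gap_dvd:
  fixes C :: "nat set"
  assumes closed: "\<forall>a\<in>C. \<forall>b\<in>C. a + b \<in> C"
    and gap: "b \<in> C" "b + g \<in> C" "0 < g"
    and least: "\<And>a e. a \<in> C \<Longrightarrow> a + e \<in> C \<Longrightarrow> 0 < e \<Longrightarrow> g \<le> e"
  shows "a \<in> C \<Longrightarrow> a + e \<in> C \<Longrightarrow> g dvd e"
proof (induction e arbitrary: a rule: less_induct)
  case (less e)
  show ?case
  proof (cases "e = 0")
    case False
    then obtain e' where e: "e = g + e'"
      using least[OF less.prems] le_Suc_ex by blast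
    \<comment> \<open>\<open>(a + e) + b = (a + (b + g)) + e'\<close> exhibits the smaller gap \<open>e'\<close>\<close>
    have "(a + e) + b \<in> C"
      using closed less.prems(2) gap(1) by blast
    then have "a + (b + g) + e' \<in> C"
      using e by (simp add: ac_simps)
    moreover have "a + (b + g) \<in> C"
      using closed less.prems(1) gap(2) by blast
    ultimately have "g dvd e'"
      using less.IH[of e'] e \<open>0 < g\<close> by simp
    then show ?thesis
      using e by simp
  qed simp
qed

lemma add_closed_large_multiples_mem:
  fixes C :: "nat set"
  assumes closed: "\<forall>a\<in>C. \<forall>b\<in>C. a + b \<in> C"
    and "b \<in> C" "b + g \<in> C" "0 < b" "g dvd b" "g dvd n" "b * b \<le> n"
  shows "n \<in> C"
proof -
  define q where "q = n div b"
  define r where "r = (n mod b) div g"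
  have "g dvd n mod b"
    using \<open>g dvd b\<close> \<open>g dvd n\<close> by (simp add: dvd_mod)
  then have rg: "r * g = n mod b"
    unfolding r_def by simp
  have "r < b"
  proof (cases "g = 0")
    case False
    then have "r \<le> r * g" by simp
    also have "\<dots> < b" using rg \<open>0 < b\<close> by simp
    finally show ?thesis .
  qed (use \<open>0 < b\<close> r_def in simp)
  moreover have "b \<le> q"
    unfolding q_def using div_le_mono[OF \<open>b * b \<le> n\<close>, of b] \<open>0 < b\<close> by simp
  ultimately have "r < q" by simp
  have "n = q * b + r * g"
    unfolding q_def rg by simp
  also have "\<dots> = (q - r) * b + r * (b + g)"
  proof -
    have "(q - r) * b + r * b = q * b"
      using \<open>r < q\<close> by (simp flip: add_mult_distrib)
    then show ?thesis
      by (simp add: algebra_simps)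
  qed
  finally show ?thesis
    using add_closed_lincomb_mem[OF closed \<open>b \<in> C\<close> \<open>b + g \<in> C\<close>, of "q - r" r] \<open>r < q\<close>
    by simp
qed

text \<open>Schur's theorem for numerical semigroups; its gcd is realised as the least positive
  difference of two elements.\<close>

lemma add_closed_eventually_contains_Gcd_multiples:
  fixes C :: "nat set"
  assumes closed: "\<forall>a\<in>C. \<forall>b\<in>C. a + b \<in> C"
    and "c \<in> C" "0 < c"
  shows "\<exists>N. \<forall>n\<ge>N. Gcd C dvd n \<longrightarrow> n \<in> C"
proof -
  define g where "g = (LEAST e. 0 < e \<and> (\<exists>a\<in>C. a + e \<in> C))"
  have "0 < c \<and> (\<exists>a\<in>C. a + c \<in> C)"
    using closed \<open>c \<in> C\<close> \<open>0 < c\<close> by blast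
  then have "0 < g \<and> (\<exists>a\<in>C. a + g \<in> C)"
    unfolding g_def by (rule LeastI)
  then obtain b0 where "0 < g" "b0 \<in> C" "b0 + g \<in> C"
    by blast
  have least: "\<And>a e. a \<in> C \<Longrightarrow> a + e \<in> C \<Longrightarrow> 0 < e \<Longrightarrow> g \<le> e"
    unfolding g_def by (rule Least_le) blast
  have gap_dvd: "g dvd e" if "a \<in> C" "a + e \<in> C" for a e
    by (rule add_closed_least_gap_dvd[OF closed \<open>b0 \<in> C\<close> \<open>b0 + g \<in> C\<close> \<open>0 < g\<close> _ that])
      (fact least)
  have dvd_mem: "g dvd a" if "a \<in> C" for a
    using gap_dvd[OF that] closed that by blast
  then have "g dvd Gcd C"
    by (rule Gcd_greatest)
  moreover have "Gcd C dvd g"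
    using Gcd_dvd[OF \<open>b0 \<in> C\<close>] Gcd_dvd[OF \<open>b0 + g \<in> C\<close>] by (simp add: dvd_add_right_iff)
  ultimately have Gcd_eq: "Gcd C = g"
    by (simp add: dvd_antisym)
  \<comment> \<open>\<open>b0\<close> may be \<open>0\<close>; shifting by \<open>c\<close> gives a positive base point\<close>
  have "(b0 + g) + c \<in> C"
    using closed \<open>b0 + g \<in> C\<close> \<open>c \<in> C\<close> by blast
  then have "(b0 + c) + g \<in> C"
    by (simp add: ac_simps)
  moreover have "b0 + c \<in> C"
    using closed \<open>b0 \<in> C\<close> \<open>c \<in> C\<close> by blast
  moreover note dvd_mem[OF this]
  ultimately have "n \<in> C" if "(b0 + c) * (b0 + c) \<le> n" "g dvd n" for n
    using add_closed_large_multiples_mem[OF closed _ _ _ _ that(2,1)] \<open>0 < c\<close> by simp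
  then show ?thesis
    unfolding Gcd_eq by blast
qed

lemma chain_from_to_D:
  assumes "chain_from_to X f d k a b"
  shows "a \<in> X" "b \<in> X" "0 < k"
  using assms unfolding chain_from_to_def is_delta_chain_def by auto

lemma chain_from_to_append:
  assumes "chain_from_to X f d k a b" "chain_from_to X f d l b c"
  shows "chain_from_to X f d (k + l) a c"
proof -
  obtain xs where xs: "is_delta_chain X f d k xs" "xs 0 = a" "xs k = b"
    using assms(1) unfolding chain_from_to_def by blast
  obtain ys where ys: "is_delta_chain X f d l ys" "ys 0 = b" "ys l = c"
    using assms(2) unfolding chain_from_to_def by blast
  define zs where "zs = (\<lambda>i. if i \<le> k then xs i else ys (i - k))"
  have "is_delta_chain X f d (k + l) zs"
    unfolding is_delta_chain_def
  proof (intro conjI allI impI)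
    show "0 < k + l"
      using xs(1) unfolding is_delta_chain_def by simp
  next
    fix i assume "i \<le> k + l"
    then show "zs i \<in> X"
      using xs(1) ys(1) unfolding is_delta_chain_def zs_def by auto
  next
    fix i assume "i < k + l"
    show "dist (f (zs i)) (zs (Suc i)) \<le> d"
    proof (cases "i < k")
      case True
      then show ?thesis
        using xs(1) unfolding is_delta_chain_def zs_def by auto
    next
      case False
      then have "zs i = ys (i - k)" "zs (Suc i) = ys (Suc (i - k))"
        using xs(3) ys(2) unfolding zs_def by (auto simp: Suc_diff_le)
      moreover have "i - k < l"
        using \<open>i < k + l\<close> False by simp
      ultimately show ?thesis
        using ys(1) unfolding is_delta_chain_def by auto
    qed
  qed
  moreover have "zs 0 = a" "zs (k + l) = c"
    using xs ys unfolding zs_def is_delta_chain_def by auto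
  ultimately show ?thesis
    unfolding chain_from_to_def by blast
qed

lemma funpow_mem:
  assumes "f ` X \<subseteq> X" "u \<in> X"
  shows "(f ^^ n) u \<in> X"
  by (induction n) (use assms in auto)

lemma chain_from_to_orbit_jump:
  assumes "f ` X \<subseteq> X" "u \<in> X" "v \<in> X" "0 \<le> d" "0 < s"
    and "dist ((f ^^ s) u) v \<le> d"
  shows "chain_from_to X f d s u v"
proof -
  define xs where "xs = (\<lambda>i. if i < s then (f ^^ i) u else v)"
  have "is_delta_chain X f d s xs"
    unfolding is_delta_chain_def
  proof (intro conjI allI impI)
    fix i assume "i \<le> s"
    then show "xs i \<in> X"
      unfolding xs_def using funpow_mem[OF assms(1,2)] assms(3) by auto
  next
    fix i assume "i < s"
    then consider "Suc i < s" | "Suc i = s"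
      by linarith
    then show "dist (f (xs i)) (xs (Suc i)) \<le> d"
      by cases (use assms(4,6) in \<open>auto simp: xs_def\<close>)
  qed fact
  moreover have "xs 0 = u" "xs s = v"
    using \<open>0 < s\<close> unfolding xs_def by auto
  ultimately show ?thesis
    unfolding chain_from_to_def by blast
qed

lemma cycle_gcd_dvd_loop:
  assumes "chain_from_to X f d k q q"
  shows "cycle_gcd X f d dvd k"
  using assms unfolding cycle_gcd_def chain_from_to_def is_delta_cycle_def by (auto intro!: Gcd_dvd)

lemma classes_D_subset: "D \<in> classes_D X f \<Longrightarrow> D \<subseteq> X"
  unfolding classes_D_def quotient_def by auto

lemma classes_D_chain_dvd_cycle_gcd:
  assumes "chain_transitive X f" "D \<in> classes_D X f" "y \<in> D" "z \<in> D" "0 < \<delta>"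
  obtains P where "chain_from_to X f \<delta> P z y" "cycle_gcd X f \<delta> dvd P"
proof -
  let ?m = "cycle_gcd X f \<delta>"
  obtain x where "x \<in> X" and D: "D = {(x, y). x \<in> X \<and> y \<in> X \<and> rel_f X f x y} `` {x}"
    using assms(2) unfolding classes_D_def quotient_def by blast
  have "z \<in> X" "rel_f X f x y" "rel_f X f x z"
    using assms(3,4) D by auto
  then obtain A B where A: "chain_from_to X f \<delta> A x y" "?m dvd A"
    and B: "chain_from_to X f \<delta> B x z" "?m dvd B"
    using \<open>0 < \<delta>\<close> unfolding rel_f_def rel_delta_def by blast
  obtain C where C: "chain_from_to X f \<delta> C z x"
    using assms(1) \<open>x \<in> X\<close> \<open>z \<in> X\<close> \<open>0 < \<delta>\<close> unfolding chain_transitive_def by blast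
  \<comment> \<open>\<open>x \<leadsto> z \<leadsto> x\<close> is a \<open>\<delta>\<close>-cycle, so the way back from \<open>z\<close> also has
     length divisible by the cycle gcd\<close>
  have "?m dvd B + C"
    using cycle_gcd_dvd_loop[OF chain_from_to_append[OF B(1) C]] .
  with B(2) A(2) have "?m dvd C + A"
    by (simp add: dvd_add_right_iff)
  then show thesis
    using that chain_from_to_append[OF C A(1)] by blast
qed

lemma loop_lengths_eventually_multiples_of_cycle_gcd:
  assumes "chain_transitive X f" "y \<in> X" "0 < \<delta>"
  obtains N where "\<And>n. N \<le> n \<Longrightarrow> cycle_gcd X f \<delta> dvd n \<Longrightarrow> chain_from_to X f \<delta> n y y"
proof -
  define L where "L = {k. chain_from_to X f \<delta> k y y}"
  have reach: "\<exists>k. chain_from_to X f \<delta> k a b" if "a \<in> X" "b \<in> X" for a b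
    using assms(1,3) that unfolding chain_transitive_def by blast
  have closed: "\<forall>a\<in>L. \<forall>b\<in>L. a + b \<in> L"
    unfolding L_def using chain_from_to_append by blast
  obtain c where "c \<in> L"
    using reach[OF \<open>y \<in> X\<close> \<open>y \<in> X\<close>] unfolding L_def by blast
  moreover have "0 < c"
    using \<open>c \<in> L\<close> chain_from_to_D(3) unfolding L_def by blast
  ultimately obtain N where N: "\<forall>n\<ge>N. Gcd L dvd n \<longrightarrow> n \<in> L"
    using add_closed_eventually_contains_Gcd_multiples[OF closed] by blast
  \<comment> \<open>conjugating a \<open>\<delta>\<close>-cycle through \<open>q\<close> by chains \<open>y \<leadsto> q \<leadsto> y\<close> gives two loops at \<open>y\<close>
     whose lengths differ by the length of the cycle\<close>
  have "Gcd L dvd k" if cycle: "chain_from_to X f \<delta> k q q" for k q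
  proof -
    obtain p1 p2 where p1: "chain_from_to X f \<delta> p1 y q" and p2: "chain_from_to X f \<delta> p2 q y"
      using reach chain_from_to_D(1)[OF cycle] \<open>y \<in> X\<close> by blast
    have "p1 + p2 \<in> L" "p1 + k + p2 \<in> L"
      unfolding L_def using chain_from_to_append p1 p2 cycle by blast+
    then have "Gcd L dvd p1 + p2" "Gcd L dvd (p1 + p2) + k"
      by (simp_all add: Gcd_dvd ac_simps)
    then show ?thesis
      by (simp add: dvd_add_right_iff)
  qed
  then have "Gcd L dvd cycle_gcd X f \<delta>"
    unfolding cycle_gcd_def is_delta_cycle_def chain_from_to_def by (auto intro: Gcd_greatest)
  then show thesis
    using that N dvd_trans unfolding L_def by blast
qed

lemma compact_seq_recurrent:
  fixes u :: "nat \<Rightarrow> 'a::metric_space"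
  assumes "compact X" "\<And>n. u n \<in> X" "0 < \<delta>"
  obtains s t where "n0 \<le> s" "s + L \<le> t" "dist (u s) (u t) < \<delta>"
proof -
  obtain l r where "strict_mono r" "(u \<circ> r) \<longlonglongrightarrow> l"
    using assms(1,2) unfolding compact_def by blast
  then have "Cauchy (u \<circ> r)"
    by (simp add: LIMSEQ_imp_Cauchy)
  then obtain M where M: "\<And>i j. M \<le> i \<Longrightarrow> M \<le> j \<Longrightarrow> dist (u (r i)) (u (r j)) < \<delta>"
    using metric_CauchyD \<open>0 < \<delta>\<close> by fastforce
  define i where "i = max M n0"
  define j where "j = r i + L"
  have "i \<le> r i" "j \<le> r j"
    using seq_suble[OF \<open>strict_mono r\<close>] by auto
  then show thesis
    using that[of "r i" "r j"] M[of i j] unfolding i_def j_def by simp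
qed

lemma classes_D_chain_to_orbit:
  assumes "compact X" "f ` X \<subseteq> X" "chain_transitive X f" "D \<in> classes_D X f"
    and "y \<in> D" "z \<in> D" "0 < \<delta>"
  obtains t where "chain_from_to X f \<delta> t z ((f ^^ t) y)"
proof -
  let ?m = "cycle_gcd X f \<delta>"
  obtain P where P: "chain_from_to X f \<delta> P z y" "?m dvd P"
    using classes_D_chain_dvd_cycle_gcd[OF assms(3-7)] .
  have "y \<in> X"
    using chain_from_to_D(2)[OF P(1)] .
  obtain N where loop: "\<And>n. N \<le> n \<Longrightarrow> ?m dvd n \<Longrightarrow> chain_from_to X f \<delta> n y y"
    using loop_lengths_eventually_multiples_of_cycle_gcd[OF assms(3) \<open>y \<in> X\<close> \<open>0 < \<delta>\<close>] by blast
  have orbit: "(f ^^ n) y \<in> X" for n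
    using funpow_mem[OF assms(2) \<open>y \<in> X\<close>] .
  obtain s t where "1 \<le> s" "s + (P + N) \<le> t" and close: "dist ((f ^^ s) y) ((f ^^ t) y) < \<delta>"
    using compact_seq_recurrent[where u = "\<lambda>n. (f ^^ n) y", OF assms(1) orbit \<open>0 < \<delta>\<close>] by blast
  have "(f ^^ (t - s)) ((f ^^ s) y) = (f ^^ (t - s + s)) y"
    by (simp add: funpow_add)
  also have "t - s + s = t"
    using \<open>s + (P + N) \<le> t\<close> by simp
  finally have "(f ^^ (t - s)) ((f ^^ s) y) = (f ^^ t) y" .
  then have "chain_from_to X f \<delta> (t - s) ((f ^^ s) y) ((f ^^ s) y)"
    using close \<open>s + (P + N) \<le> t\<close> \<open>0 < \<delta>\<close> chain_from_to_D(3)[OF P(1)]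
    by (intro chain_from_to_orbit_jump[OF assms(2) orbit orbit]) (simp_all add: dist_commute)
  then have "?m dvd t - s - P"
    using cycle_gcd_dvd_loop P(2) by (metis diff_diff_left dvd_diff_nat)
  then have "chain_from_to X f \<delta> (t - s - P) y y"
    using loop \<open>s + (P + N) \<le> t\<close> by simp
  moreover have "chain_from_to X f \<delta> s y ((f ^^ t) y)"
    using close \<open>1 \<le> s\<close> \<open>0 < \<delta>\<close>
    by (intro chain_from_to_orbit_jump[OF assms(2) \<open>y \<in> X\<close> orbit]) simp_all
  ultimately have "chain_from_to X f \<delta> (P + (t - s - P) + s) z ((f ^^ t) y)"
    using chain_from_to_append P(1) by blast
  moreover have "P + (t - s - P) + s = t"
    using \<open>s + (P + N) \<le> t\<close> by simp
  ultimately show thesis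
    using that by simp
qed

lemma chain_to_orbit_pseudo_orbit:
  assumes "f ` X \<subseteq> X" "y \<in> X" "0 \<le> \<delta>" "chain_from_to X f \<delta> t z ((f ^^ t) y)"
  obtains xs where "pseudo_orbit X f \<delta> xs" "xs 0 = z" "\<And>k. t \<le> k \<Longrightarrow> xs k = (f ^^ k) y"
proof -
  obtain cs where cs: "is_delta_chain X f \<delta> t cs" "cs 0 = z" "cs t = (f ^^ t) y"
    using assms(4) unfolding chain_from_to_def by blast
  define xs where "xs = (\<lambda>i. if i \<le> t then cs i else (f ^^ i) y)"
  have "pseudo_orbit X f \<delta> xs"
    unfolding pseudo_orbit_def
  proof (intro conjI allI)
    fix i
    show "xs i \<in> X"
      using cs(1) funpow_mem[OF assms(1,2)] unfolding xs_def is_delta_chain_def by auto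
    show "dist (f (xs i)) (xs (Suc i)) \<le> \<delta>"
    proof (cases "i < t")
      case True
      then show ?thesis
        using cs(1) unfolding xs_def is_delta_chain_def by auto
    next
      case False
      then have "xs i = (f ^^ i) y" "xs (Suc i) = (f ^^ Suc i) y"
        using cs(3) unfolding xs_def by auto
      then show ?thesis
        using assms(3) by simp
    qed
  qed
  moreover have "xs 0 = z" "\<And>k. t \<le> k \<Longrightarrow> xs k = (f ^^ k) y"
    using cs(2,3) unfolding xs_def by auto
  ultimately show thesis
    using that by blast
qed

theorem lemma5p3:
  fixes X :: "'a::metric_space set" and f :: "'a \<Rightarrow> 'a" and D :: "'a set"
  assumes "compact X" and "f ` X \<subseteq> X" and "continuous_on X f"
    and "chain_transitive X f"
    and "D \<in> classes_D X f"
    and "\<forall>\<epsilon>>0. \<exists>\<delta>>0. \<forall>xs. pseudo_orbit X f \<delta> xs \<and> xs 0 \<in> D \<longrightarrow>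
            (\<exists>x\<in>D. shadowed_by f \<epsilon> xs x)"
  shows "\<forall>y\<in>D. \<forall>z\<in>D. \<forall>\<epsilon>>0. \<exists>w\<in>D. dist z w \<le> \<epsilon> \<and>
            limsup (\<lambda>k. ereal (dist ((f ^^ k) y) ((f ^^ k) w))) \<le> ereal \<epsilon>"
proof (intro ballI allI impI)
  fix y z and \<epsilon> :: real
  assume "y \<in> D" "z \<in> D" "0 < \<epsilon>"
  then obtain \<delta> where "0 < \<delta>"
    and shadow: "\<And>xs. pseudo_orbit X f \<delta> xs \<Longrightarrow> xs 0 \<in> D \<Longrightarrow> \<exists>w\<in>D. shadowed_by f \<epsilon> xs w"
    using assms(6) by blast
  obtain t where "chain_from_to X f \<delta> t z ((f ^^ t) y)"
    using classes_D_chain_to_orbit[OF assms(1,2,4,5) \<open>y \<in> D\<close> \<open>z \<in> D\<close> \<open>0 < \<delta>\<close>] .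
  moreover have "y \<in> X"
    using classes_D_subset[OF assms(5)] \<open>y \<in> D\<close> by blast
  ultimately obtain xs where xs: "pseudo_orbit X f \<delta> xs" "xs 0 = z" "\<And>k. t \<le> k \<Longrightarrow> xs k = (f ^^ k) y"
    using chain_to_orbit_pseudo_orbit[OF assms(2)] \<open>0 < \<delta>\<close> by (metis less_imp_le)
  then obtain w where "w \<in> D" and w: "\<And>k. dist ((f ^^ k) w) (xs k) \<le> \<epsilon>"
    using shadow \<open>z \<in> D\<close> unfolding shadowed_by_def by blast
  have "dist z w \<le> \<epsilon>"
    using w[of 0] xs(2) by (simp add: dist_commute)
  moreover have "limsup (\<lambda>k. ereal (dist ((f ^^ k) y) ((f ^^ k) w))) \<le> ereal \<epsilon>"
  proof (rule Limsup_bounded)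
    show "\<forall>\<^sub>F k in sequentially. ereal (dist ((f ^^ k) y) ((f ^^ k) w)) \<le> ereal \<epsilon>"
      unfolding eventually_sequentially using w xs(3) by (metis dist_commute ereal_less_eq(3))
  qed
  ultimately show "\<exists>w\<in>D. dist z w \<le> \<epsilon> \<and>
      limsup (\<lambda>k. ereal (dist ((f ^^ k) y) ((f ^^ k) w))) \<le> ereal \<epsilon>"
    using \<open>w \<in> D\<close> by blast
qed

end
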